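(* Let $\mathcal H$ be a Hilbert space, let $J$ be a directed set, let $\{U_j\}_{j\in J}$ be a net of unitary operators on $\mathcal H$, and let $\{\ell_j\}_{j\in J}\subset[0,\infty)$ satisfy $\ell_j\to\infty$. Assume there exists a self-adjoint operator $A$ in $\mathcal H$ such that $U_j\in C^1(A)$ for each $j\in J$, and suppose that the strong limit $$D:=\operatorname{s-lim}_j\frac{1}{\ell_j}[A,U_j]U_j^{-1}$$ exists (the operators being defined for $j$ large enough that $\ell_j\neq0$). Then $\lim_j\langle\varphi,U_j\psi\rangle=0$ for all $\varphi\in\ker(D)^\perp$ and all $\psi\in\mathcal H$.
   Context: The scalar product $\langle\cdot,\cdot\rangle$ is antilinear in the first argument. For a self-adjoint operator $A$ with domain $\mathrm{dom}(A)$ and a bounded operator $S$ on $\mathcal H$, one writes $S\in C^1(A)$ if the map $\mathbb R\ni t\mapsto e^{-itA}Se^{itA}$ is strongly continuously differentiable; equivalently, the quadratic form $\mathrm{dom}(A)\ni\varphi\mapsto\langle A\varphi,S\varphi\rangle-\langle \varphi,SA\varphi\rangle$ is continuous for the topology of $\mathcal H$. In that case $[A,S]$ denotes the bounded operator associated with the continuous extension of this form (i.e. $[A,S]=AS-SA$ in the form sense on $\mathrm{dom}(A)$). *)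

theory Defs
  imports "HOL-Analysis.Analysis"
begin

text \<open>The scalar product is antilinear in the first argument, linear in the second.\<close>

class complex_inner = real_normed_vector +
  fixes scaleC :: "complex \<Rightarrow> 'a \<Rightarrow> 'a" (infixr "*\<^sub>C" 75)
    and cinner :: "'a \<Rightarrow> 'a \<Rightarrow> complex"
  assumes scaleC_add_right: "a *\<^sub>C (x + y) = a *\<^sub>C x + a *\<^sub>C y"
    and scaleC_add_left: "(a + b) *\<^sub>C x = a *\<^sub>C x + b *\<^sub>C x"
    and scaleC_scaleC: "a *\<^sub>C (b *\<^sub>C x) = (a * b) *\<^sub>C x"
    and scaleC_one: "1 *\<^sub>C x = x"
    and scaleR_scaleC: "scaleR r x = complex_of_real r *\<^sub>C x"
    and cinner_add_right: "cinner x (y + z) = cinner x y + cinner x z"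
    and cinner_scaleC_right: "cinner x (a *\<^sub>C y) = a * cinner x y"
    and cinner_commute: "cinner x y = cnj (cinner y x)"
    and cinner_pos: "x \<noteq> 0 \<Longrightarrow> Re (cinner x x) > 0"
    and norm_eq_sqrt_cinner: "norm x = sqrt (Re (cinner x x))"

class chilbert_space = complex_inner + complete_space

definition csubspace :: "'a::complex_inner set \<Rightarrow> bool" where
  "csubspace S \<longleftrightarrow> 0 \<in> S \<and> (\<forall>x\<in>S. \<forall>y\<in>S. x + y \<in> S) \<and> (\<forall>c. \<forall>x\<in>S. c *\<^sub>C x \<in> S)"

definition bounded_clinear :: "('a::complex_inner \<Rightarrow> 'b::complex_inner) \<Rightarrow> bool" where
  "bounded_clinear f \<longleftrightarrow>
     (\<forall>x y. f (x + y) = f x + f y) \<and> (\<forall>c x. f (c *\<^sub>C x) = c *\<^sub>C f x) \<and>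
     (\<exists>K. \<forall>x. norm (f x) \<le> norm x * K)"

definition unitary :: "('a::complex_inner \<Rightarrow> 'a) \<Rightarrow> bool" where
  "unitary U \<longleftrightarrow> bounded_clinear U \<and> surj U \<and> (\<forall>x y. cinner (U x) (U y) = cinner x y)"

text \<open>Self-adjoint (possibly unbounded) operator A with domain Dom: densely defined,
  linear on its domain, and equal to its adjoint (same domain, same action).\<close>
definition self_adjoint :: "('a::complex_inner \<Rightarrow> 'a) \<Rightarrow> 'a set \<Rightarrow> bool" where
  "self_adjoint A Dom \<longleftrightarrow>
     csubspace Dom \<and> closure Dom = UNIV \<and>
     (\<forall>x\<in>Dom. \<forall>y\<in>Dom. A (x + y) = A x + A y) \<and>
     (\<forall>c. \<forall>x\<in>Dom. A (c *\<^sub>C x) = c *\<^sub>C A x) \<and>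
     (\<forall>\<psi>. \<psi> \<in> Dom \<longleftrightarrow> (\<exists>\<eta>. \<forall>\<phi>\<in>Dom. cinner \<psi> (A \<phi>) = cinner \<eta> \<phi>)) \<and>
     (\<forall>\<psi>\<in>Dom. \<forall>\<phi>\<in>Dom. cinner \<psi> (A \<phi>) = cinner (A \<psi>) \<phi>)"

text \<open>S \<in> C^1(A): S bounded and the quadratic form
  \<phi> \<mapsto> <A\<phi>, S\<phi>> - <\<phi>, S A \<phi>> on Dom(A) is continuous for the topology of H,
  i.e. it is the restriction of the form of a bounded operator.\<close>
definition C1 :: "('a::complex_inner \<Rightarrow> 'a) \<Rightarrow> 'a set \<Rightarrow> ('a \<Rightarrow> 'a) \<Rightarrow> bool" where
  "C1 A Dom S \<longleftrightarrow> bounded_clinear S \<and>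
     (\<exists>B. bounded_clinear B \<and>
        (\<forall>\<phi>\<in>Dom. cinner \<phi> (B \<phi>) = cinner (A \<phi>) (S \<phi>) - cinner \<phi> (S (A \<phi>))))"

text \<open>The commutator [A,S]: the bounded operator associated with the continuous extension
  of the above form (unique by density of Dom and polarization).\<close>
definition commutator :: "('a::complex_inner \<Rightarrow> 'a) \<Rightarrow> 'a set \<Rightarrow> ('a \<Rightarrow> 'a) \<Rightarrow> ('a \<Rightarrow> 'a)" where
  "commutator A Dom S = (THE B. bounded_clinear B \<and>
        (\<forall>\<phi>\<in>Dom. cinner \<phi> (B \<phi>) = cinner (A \<phi>) (S \<phi>) - cinner \<phi> (S (A \<phi>))))"

definition orth_compl :: "'a::complex_inner set \<Rightarrow> 'a set" where
  "orth_compl S = {\<phi>. \<forall>x\<in>S. cinner x \<phi> = 0}"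

definition directed_set :: "('j \<Rightarrow> 'j \<Rightarrow> bool) \<Rightarrow> bool" where
  "directed_set le \<longleftrightarrow> (\<forall>a. le a a) \<and> (\<forall>a b c. le a b \<longrightarrow> le b c \<longrightarrow> le a c) \<and>
     (\<forall>a b. \<exists>c. le a c \<and> le b c)"

text \<open>The filter of tails of a net indexed by the directed set (UNIV, le).\<close>
definition net :: "('j \<Rightarrow> 'j \<Rightarrow> bool) \<Rightarrow> 'j filter" where
  "net le = (INF k. principal {j. le k j})"

end

theory Submission
  imports Defs
begin

text \<open>Write \<open>D\<^sub>j = \<ell>\<^sub>j\<^sup>-\<^sup>1 [A, U\<^sub>j] U\<^sub>j\<^sup>-\<^sup>1\<close>. Since \<open>U\<^sub>j\<^sup>-\<^sup>1\<close> preserves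
  \<open>dom A\<close>, each \<open>D\<^sub>j\<close> is symmetric on \<open>dom A\<close>, and for \<open>\<eta>, \<psi> \<in> dom A\<close>
  \<open>\<langle>D\<^sub>j \<eta>, U\<^sub>j \<psi>\<rangle> = \<ell>\<^sub>j\<^sup>-\<^sup>1 (\<langle>A \<eta>, U\<^sub>j \<psi>\<rangle> - \<langle>\<eta>, U\<^sub>j A \<psi>\<rangle>) = O(\<ell>\<^sub>j\<^sup>-\<^sup>1)\<close>.
  Replacing \<open>D\<^sub>j \<eta>\<close> by its strong limit \<open>D \<eta>\<close> gives \<open>\<langle>D \<eta>, U\<^sub>j \<psi>\<rangle> \<rightarrow> 0\<close>, and as
  the \<open>U\<^sub>j\<close> are uniformly bounded this extends to all \<open>\<psi>\<close> and to all \<open>\<phi>\<close> in the closure of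
  \<open>D(dom A)\<close>. The limit \<open>D\<close> is again symmetric on the dense set \<open>dom A\<close>, so
  \<open>D(dom A)\<^sup>\<bottom> \<subseteq> ker D\<close>, i.e.\ \<open>ker(D)\<^sup>\<bottom>\<close> lies in that closure.\<close>

lemma cinner_add_left: "cinner (x + y) (z::'a::complex_inner) = cinner x z + cinner y z"
  by (metis cinner_add_right cinner_commute complex_cnj_add)

lemma cinner_scaleC_left: "cinner (a *\<^sub>C x) (y::'a::complex_inner) = cnj a * cinner x y"
  by (metis cinner_commute cinner_scaleC_right complex_cnj_mult complex_cnj_cnj)

lemma cinner_zero_right [simp]: "cinner (x::'a::complex_inner) 0 = 0"
  using cinner_add_right[of x 0 0] by simp

lemma cinner_zero_left [simp]: "cinner 0 (x::'a::complex_inner) = 0"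
  using cinner_add_left[of 0 0 x] by simp

lemma cinner_diff_right: "cinner (x::'a::complex_inner) (y - z) = cinner x y - cinner x z"
  by (metis add_diff_cancel_right' cinner_add_right diff_add_cancel)

lemma cinner_diff_left: "cinner (x - y) (z::'a::complex_inner) = cinner x z - cinner y z"
  by (metis add_diff_cancel_right' cinner_add_left diff_add_cancel)

lemma cinner_self: "cinner x x = complex_of_real ((norm (x::'a::complex_inner))\<^sup>2)"
proof -
  have "Im (cinner x x) = Im (cnj (cinner x x))"
    by (metis cinner_commute)
  moreover have "Re (cinner x x) \<ge> 0"
    using cinner_pos[of x] by (cases "x = 0") auto
  ultimately show ?thesis
    using norm_eq_sqrt_cinner[of x] by (simp add: complex_eq_iff)
qed

lemma cinner_self_eq_0 [simp]: "cinner x x = 0 \<longleftrightarrow> (x::'a::complex_inner) = 0"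
  by (simp add: cinner_self)

lemma norm_scaleC: "norm (a *\<^sub>C (x::'a::complex_inner)) = cmod a * norm x"
proof -
  have "(norm (a *\<^sub>C x))\<^sup>2 = Re (cinner (a *\<^sub>C x) (a *\<^sub>C x))"
    by (simp add: cinner_self)
  also have "\<dots> = Re ((a * cnj a) * cinner x x)"
    by (simp add: cinner_scaleC_left cinner_scaleC_right mult.assoc mult.left_commute)
  also have "\<dots> = (cmod a * norm x)\<^sup>2"
    by (simp only: complex_norm_square[symmetric] cinner_self of_real_mult[symmetric]
        Re_complex_of_real power_mult_distrib)
  finally show ?thesis
    by (simp add: power2_eq_iff_nonneg)
qed

lemma norm_add_square:
  "(norm (x + y))\<^sup>2 = (norm x)\<^sup>2 + 2 * Re (cinner x y) + (norm (y::'a::complex_inner))\<^sup>2"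
proof -
  have "Re (cinner y x) = Re (cinner x y)"
    by (metis cinner_commute complex_cnj_cnj cnj.sel(1))
  then show ?thesis
    using cinner_self[of "x + y"] cinner_self[of x] cinner_self[of y]
    by (simp add: cinner_add_left cinner_add_right complex_eq_iff)
qed

text \<open>Common core of the Cauchy--Schwarz inequality (\<open>e = \<parallel>v\<parallel>\<^sup>2\<close>) and of the
  orthogonality of nearest points (\<open>e = 0\<close>); the proof uses the perturbation that removes the
  component of \<open>v\<close> along \<open>y\<close>.\<close>
lemma cinner_perturbation_bound:
  fixes v y :: "'a::complex_inner"
  assumes "\<And>t. (norm v)\<^sup>2 - e \<le> (norm (v + t *\<^sub>C y))\<^sup>2"
  shows "(cmod (cinner y v))\<^sup>2 \<le> e * (norm y)\<^sup>2"
proof (cases "y = 0")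
  case True
  then show ?thesis using assms[of 0] by simp
next
  case False
  define a where "a = cinner y v"
  define n where "n = (norm y)\<^sup>2"
  have n: "n > 0" using False by (simp add: n_def)
  define t where "t = - a / complex_of_real n"
  have "t * cinner v y = - complex_of_real ((cmod a)\<^sup>2 / n)"
    using complex_norm_square[of a] by (simp add: t_def a_def cinner_commute[of v y])
  then have "Re (t * cinner v y) = - ((cmod a)\<^sup>2 / n)"
    by simp
  moreover have "(cmod t)\<^sup>2 = (cmod a)\<^sup>2 / n\<^sup>2"
    using n by (simp add: t_def norm_divide power_divide)
  ultimately have "(norm v)\<^sup>2 - e \<le> (norm v)\<^sup>2 - 2 * ((cmod a)\<^sup>2 / n) + (cmod a)\<^sup>2 / n\<^sup>2 * n"
    using assms[of t] by (simp add: norm_add_square cinner_scaleC_right norm_scaleC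
        power_mult_distrib n_def)
  also have "(cmod a)\<^sup>2 / n\<^sup>2 * n = (cmod a)\<^sup>2 / n"
    using n by (simp add: power2_eq_square)
  finally show ?thesis
    using n by (simp add: a_def n_def[symmetric] divide_le_eq mult.commute)
qed

lemma cmod_cinner_le: "cmod (cinner x y) \<le> norm x * norm (y::'a::complex_inner)"
proof -
  have "(cmod (cinner x y))\<^sup>2 \<le> (norm y)\<^sup>2 * (norm x)\<^sup>2"
    by (rule cinner_perturbation_bound) simp
  then show ?thesis
    by (simp add: power_mult_distrib[symmetric] power2_le_iff_abs_le mult.commute)
qed

lemma bounded_linear_cinner_right: "bounded_linear (\<lambda>y. cinner (x::'a::complex_inner) y)"
proof (rule bounded_linear_intro[where K = "norm x"])
  show "norm (cinner x y) \<le> norm y * norm x" for y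
    using cmod_cinner_le[of x y] by (simp add: mult.commute)
qed (auto simp: cinner_add_right scaleR_scaleC cinner_scaleC_right scaleR_conv_of_real)

lemma bounded_linear_cinner_left: "bounded_linear (\<lambda>y. cinner y (x::'a::complex_inner))"
  by (rule bounded_linear_intro[where K = "norm x"])
    (auto simp: cinner_add_left scaleR_scaleC cinner_scaleC_left scaleR_conv_of_real cmod_cinner_le)

lemma bounded_linear_scaleC: "bounded_linear (\<lambda>x. c *\<^sub>C (x::'a::complex_inner))"
  by (rule bounded_linear_intro[where K = "cmod c"])
    (auto simp: scaleC_add_right scaleR_scaleC scaleC_scaleC mult.commute norm_scaleC)

definition clinear :: "('a::complex_inner \<Rightarrow> 'b::complex_inner) \<Rightarrow> bool" where
  "clinear f \<longleftrightarrow> (\<forall>x y. f (x + y) = f x + f y) \<and> (\<forall>c x. f (c *\<^sub>C x) = c *\<^sub>C f x)"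

lemma bounded_clinear_iff: "bounded_clinear f \<longleftrightarrow> clinear f \<and> (\<exists>K. \<forall>x. norm (f x) \<le> norm x * K)"
  unfolding bounded_clinear_def clinear_def by blast

lemma clinear_add: "clinear f \<Longrightarrow> f (x + y) = f x + f y"
  unfolding clinear_def by blast

lemma clinear_scaleC: "clinear f \<Longrightarrow> f (c *\<^sub>C x) = c *\<^sub>C f x"
  unfolding clinear_def by blast

lemma bounded_clinear_clinear: "bounded_clinear f \<Longrightarrow> clinear f"
  by (simp add: bounded_clinear_iff)

lemma bounded_clinear_bounded_linear:
  assumes "bounded_clinear f"
  shows "bounded_linear f"
proof -
  obtain K where "\<forall>x. norm (f x) \<le> norm x * K"
    using assms by (auto simp: bounded_clinear_iff)
  with assms show ?thesis
    by (intro bounded_linear_intro[where K = K])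
      (auto simp: bounded_clinear_iff clinear_add scaleR_scaleC clinear_scaleC)
qed

lemma unitary_bounded_clinear: "unitary U \<Longrightarrow> bounded_clinear U"
  unfolding unitary_def by blast

lemma unitary_cinner: "unitary U \<Longrightarrow> cinner (U x) (U y) = cinner x y"
  unfolding unitary_def by blast

lemma unitary_norm:
  assumes "unitary U"
  shows "norm (U x) = norm x"
proof -
  have "complex_of_real ((norm (U x))\<^sup>2) = complex_of_real ((norm x)\<^sup>2)"
    by (simp only: cinner_self[symmetric] unitary_cinner[OF assms])
  then show ?thesis
    by (simp only: of_real_eq_iff power2_eq_iff_nonneg norm_ge_zero)
qed

lemma unitary_diff: "unitary U \<Longrightarrow> U (x - y) = U x - U y"
  using linear_diff bounded_linear.linear bounded_clinear_bounded_linear unitary_bounded_clinear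
  by blast

lemma unitary_inj:
  assumes U: "unitary U"
  shows "inj U"
proof (rule injI)
  fix x y assume "U x = U y"
  then have "U (x - y) = 0"
    by (simp add: unitary_diff[OF U])
  then show "x = y"
    using unitary_norm[OF U, of "x - y"] by simp
qed

lemma unitary_inv_right: "unitary U \<Longrightarrow> U (inv U y) = y"
  unfolding unitary_def by (meson surj_f_inv_f)

lemma unitary_inv_left: "unitary U \<Longrightarrow> inv U (U x) = x"
  by (meson inv_f_f unitary_inj)

lemma cinner_inv_unitary_left: "unitary U \<Longrightarrow> cinner (inv U y) x = cinner y (U x)"
  by (metis unitary_cinner unitary_inv_right)

lemma unitary_inv:
  assumes U: "unitary U"
  shows "unitary (inv U)"
proof -
  have lin: "clinear U"
    using U bounded_clinear_clinear unitary_bounded_clinear by blast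
  have "clinear (inv U)"
    unfolding clinear_def
  proof (intro conjI allI)
    fix x y
    show "inv U (x + y) = inv U x + inv U y"
      using unitary_inv_left[OF U, of "inv U x + inv U y"]
      by (simp add: clinear_add[OF lin] unitary_inv_right[OF U])
  next
    fix c x
    show "inv U (c *\<^sub>C x) = c *\<^sub>C inv U x"
      using unitary_inv_left[OF U, of "c *\<^sub>C inv U x"]
      by (simp add: clinear_scaleC[OF lin] unitary_inv_right[OF U])
  qed
  moreover have "norm (inv U x) \<le> norm x * 1" for x
    using unitary_norm[OF U, of "inv U x"] by (simp add: unitary_inv_right[OF U])
  ultimately have "bounded_clinear (inv U)"
    unfolding bounded_clinear_iff by blast
  moreover have "surj (inv U)"
    using unitary_inv_left[OF U] by (metis surjI)
  moreover have "cinner (inv U x) (inv U y) = cinner x y" for x y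
    using cinner_inv_unitary_left[OF U] unitary_inv_right[OF U] by simp
  ultimately show ?thesis
    unfolding unitary_def by blast
qed

section \<open>Subspaces, density and orthogonal projection\<close>

lemma csubspace_0: "csubspace S \<Longrightarrow> 0 \<in> S"
  unfolding csubspace_def by blast

lemma csubspace_add: "csubspace S \<Longrightarrow> x \<in> S \<Longrightarrow> y \<in> S \<Longrightarrow> x + y \<in> S"
  unfolding csubspace_def by blast

lemma csubspace_scaleC: "csubspace S \<Longrightarrow> x \<in> S \<Longrightarrow> c *\<^sub>C x \<in> S"
  unfolding csubspace_def by blast

lemma csubspace_diff:
  assumes S: "csubspace S" and "x \<in> S" "y \<in> S"
  shows "x - y \<in> S"
proof -
  have "(-1) *\<^sub>C y = - y"
    using scaleR_scaleC[of "-1" y] by simp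
  then show ?thesis
    using csubspace_add[OF S \<open>x \<in> S\<close> csubspace_scaleC[OF S \<open>y \<in> S\<close>, of "-1"]] by simp
qed

lemma csubspace_closure:
  assumes S: "csubspace S"
  shows "csubspace (closure S)"
  unfolding csubspace_def
proof (intro conjI ballI allI)
  show "0 \<in> closure S"
    using csubspace_0[OF S] closure_subset by blast
next
  fix x y assume "x \<in> closure S" "y \<in> closure S"
  then have "x + y \<in> closure (S + S)"
    using closure_sum set_plus_intro by blast
  moreover have "S + S \<subseteq> S"
    using csubspace_add[OF S] by (auto elim: set_plus_elim)
  ultimately show "x + y \<in> closure S"
    using closure_mono by blast
next
  fix c x assume "x \<in> closure S"
  then have "c *\<^sub>C x \<in> closure ((\<lambda>x. c *\<^sub>C x) ` S)"
    using closure_bounded_linear_image_subset[OF bounded_linear_scaleC] by blast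
  moreover have "(\<lambda>x. c *\<^sub>C x) ` S \<subseteq> S"
    using csubspace_scaleC[OF S] by blast
  ultimately show "c *\<^sub>C x \<in> closure S"
    using closure_mono by blast
qed

lemma dense_bounded_linear_eq_0:
  assumes "closure S = UNIV" "bounded_linear f" "\<And>x. x \<in> S \<Longrightarrow> f x = 0"
  shows "f x = 0"
  using continuous_constant_on_closure[of S f 0 x] assms linear_continuous_on by auto

lemma dense_orthogonal_eq_0:
  fixes v :: "'a::complex_inner"
  assumes "closure S = UNIV" "\<And>x. x \<in> S \<Longrightarrow> cinner x v = 0"
  shows "v = 0"
proof -
  have "cinner v v = 0"
    by (rule dense_bounded_linear_eq_0[OF assms(1) bounded_linear_cinner_left]) (rule assms(2))
  then show ?thesis by simp
qed

text \<open>The parallelogram law applied to \<open>w - a\<close>, \<open>w - b\<close> and the midpoint of \<open>a\<close>, \<open>b\<close>.\<close>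
lemma near_minimizers_close:
  fixes w :: "'a::complex_inner"
  assumes M: "csubspace M" and low: "\<And>x. x \<in> M \<Longrightarrow> d \<le> (norm (w - x))\<^sup>2"
    and "a \<in> M" "b \<in> M"
  shows "(norm (a - b))\<^sup>2 \<le> 2 * ((norm (w - a))\<^sup>2 - d) + 2 * ((norm (w - b))\<^sup>2 - d)"
proof -
  define m where "m = (1/2::real) *\<^sub>R (a + b)"
  have "m \<in> M"
    unfolding m_def scaleR_scaleC by (intro csubspace_scaleC[OF M] csubspace_add[OF M] assms)
  moreover have "(w - a) + (w - b) = 2 *\<^sub>R (w - m)"
    by (simp add: m_def algebra_simps scaleR_2)
  ultimately have "4 * d \<le> (norm ((w - a) + (w - b)))\<^sup>2"
    using low[of m] by (simp add: power_mult_distrib)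
  moreover have "(norm ((w - a) - (w - b)))\<^sup>2
      = 2 * (norm (w - a))\<^sup>2 + 2 * (norm (w - b))\<^sup>2 - (norm ((w - a) + (w - b)))\<^sup>2"
    using norm_add_square[of "w - a" "w - b"] norm_add_square[of "w - a" "b - w"]
    by (simp add: cinner_diff_right norm_minus_commute)
  ultimately show ?thesis
    by (simp add: norm_minus_commute)
qed

lemma Cauchy_if_dist_le_null:
  assumes "\<And>N m n. N \<le> m \<Longrightarrow> N \<le> n \<Longrightarrow> dist (X m) (X n) \<le> r N" and "r \<longlonglongrightarrow> 0"
  shows "Cauchy X"
proof (rule metric_CauchyI)
  fix e :: real assume "e > 0"
  then obtain N where "r N < e"
    using order_tendstoD(2)[OF assms(2)] eventually_sequentially by (metis order_refl)
  then show "\<exists>N. \<forall>m\<ge>N. \<forall>n\<ge>N. dist (X m) (X n) < e"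
    using assms(1) by (meson le_less_trans)
qed

lemma closed_csubspace_nearest_point:
  fixes w :: "'a::chilbert_space"
  assumes M: "csubspace M" and "closed M"
  shows "\<exists>p\<in>M. \<forall>x\<in>M. norm (w - p) \<le> norm (w - x)"
proof -
  define d where "d = Inf ((\<lambda>x. (norm (w - x))\<^sup>2) ` M)"
  have low: "d \<le> (norm (w - x))\<^sup>2" if "x \<in> M" for x
    unfolding d_def by (rule cInf_lower) (use that in \<open>auto intro: bdd_belowI[where m = 0]\<close>)
  have "\<exists>x\<in>M. (norm (w - x))\<^sup>2 < d + 1 / real (Suc n)" for n
    using cInf_lessD[of "(\<lambda>x. (norm (w - x))\<^sup>2) ` M" "d + 1 / real (Suc n)"] csubspace_0[OF M]
    by (auto simp: d_def)
  then obtain X where X: "\<And>n. X n \<in> M" "\<And>n. (norm (w - X n))\<^sup>2 < d + 1 / real (Suc n)"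
    by metis
  have "Cauchy X"
  proof (rule Cauchy_if_dist_le_null)
    fix N m n :: nat assume "N \<le> m" "N \<le> n"
    then have "2 / real (Suc m) + 2 / real (Suc n) \<le> 4 * inverse (real (Suc N))"
      using frac_le[of 2 2 "real (Suc N)" "real (Suc m)"] frac_le[of 2 2 "real (Suc N)" "real (Suc n)"]
      by (simp add: inverse_eq_divide)
    moreover have "(norm (X m - X n))\<^sup>2 \<le> 2 / real (Suc m) + 2 / real (Suc n)"
      using near_minimizers_close[OF M low X(1) X(1), of m n] X(2)[of m] X(2)[of n] by simp
    ultimately show "dist (X m) (X n) \<le> sqrt (4 * inverse (real (Suc N)))"
      by (simp add: dist_norm real_le_rsqrt)
  next
    show "(\<lambda>N. sqrt (4 * inverse (real (Suc N)))) \<longlonglongrightarrow> 0"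
      using tendsto_real_sqrt[OF tendsto_mult_right_zero[OF LIMSEQ_inverse_real_of_nat, of 4]]
      by simp
  qed
  then obtain p where p: "X \<longlonglongrightarrow> p"
    using Cauchy_convergent_iff convergent_def by blast
  have "p \<in> M"
    using \<open>closed M\<close> X(1) p closed_sequentially by blast
  moreover have "(norm (w - p))\<^sup>2 \<le> d"
  proof (rule tendsto_le[OF trivial_limit_sequentially])
    show "(\<lambda>n. (norm (w - X n))\<^sup>2) \<longlonglongrightarrow> (norm (w - p))\<^sup>2"
      by (intro tendsto_intros p)
    show "(\<lambda>n. d + inverse (real (Suc n))) \<longlonglongrightarrow> d"
      using tendsto_add[OF tendsto_const LIMSEQ_inverse_real_of_nat, of d] by simp
    show "\<forall>\<^sub>F n in sequentially. (norm (w - X n))\<^sup>2 \<le> d + inverse (real (Suc n))"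
      using X(2) by (simp add: less_imp_le inverse_eq_divide)
  qed
  ultimately show ?thesis
    using low by (meson norm_ge_zero order_trans power2_le_imp_le)
qed

lemma closed_csubspace_projection:
  fixes w :: "'a::chilbert_space"
  assumes M: "csubspace M" and "closed M"
  shows "\<exists>p\<in>M. \<forall>y\<in>M. cinner y (w - p) = 0"
proof -
  obtain p where p: "p \<in> M" and nearest: "\<And>x. x \<in> M \<Longrightarrow> norm (w - p) \<le> norm (w - x)"
    using closed_csubspace_nearest_point[OF assms] by blast
  have "cinner y (w - p) = 0" if y: "y \<in> M" for y
  proof -
    have "(cmod (cinner y (w - p)))\<^sup>2 \<le> 0 * (norm y)\<^sup>2"
    proof (rule cinner_perturbation_bound)
      fix t
      have "norm (w - p) \<le> norm (w - (p - t *\<^sub>C y))"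
        by (intro nearest csubspace_diff[OF M p] csubspace_scaleC[OF M y])
      also have "w - (p - t *\<^sub>C y) = (w - p) + t *\<^sub>C y"
        by simp
      finally show "(norm (w - p))\<^sup>2 - 0 \<le> (norm ((w - p) + t *\<^sub>C y))\<^sup>2"
        by (simp add: power_mono)
    qed
    then show ?thesis
      by simp
  qed
  with p show ?thesis
    by blast
qed

lemma riesz_representation:
  fixes f :: "'a::chilbert_space \<Rightarrow> complex"
  assumes f: "bounded_linear f" and hom: "\<And>c x. f (c *\<^sub>C x) = c * f x"
  shows "\<exists>z. \<forall>x. f x = cinner z x"
proof (cases "\<forall>x. f x = 0")
  case True
  then show ?thesis by (intro exI[of _ 0]) simp
next
  case False
  then obtain w where w: "f w \<noteq> 0" by blast
  interpret f: bounded_linear f by (rule f)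
  define N where "N = {x. f x = 0}"
  have "csubspace N"
    unfolding csubspace_def N_def by (auto simp: f.add hom)
  moreover have "closed N"
    unfolding N_def by (rule closed_Collect_eq) (auto intro: linear_continuous_on f)
  ultimately obtain p where p: "p \<in> N" "\<And>y. y \<in> N \<Longrightarrow> cinner y (w - p) = 0"
    using closed_csubspace_projection by blast
  define z where "z = w - p"
  have "f z \<noteq> 0"
    using p(1) w by (simp add: z_def f.diff N_def)
  then have nz: "cinner z z \<noteq> 0"
    by auto
  show ?thesis
  proof (intro exI allI)
    fix x
    have "f x *\<^sub>C z - f z *\<^sub>C x \<in> N"
      by (simp add: N_def f.diff hom)
    then have "cinner (f x *\<^sub>C z - f z *\<^sub>C x) z = 0"
      using p(2) z_def by blast
    then have "cnj (f x) * cinner z z = cnj (f z) * cinner x z"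
      by (simp add: cinner_diff_left cinner_scaleC_left)
    then have "f x * cinner z z = f z * cinner z x"
      by (metis cinner_commute complex_cnj_cnj complex_cnj_mult)
    then show "f x = cinner (cnj (f z / cinner z z) *\<^sub>C z) x"
      using nz by (simp add: cinner_scaleC_left field_simps)
  qed
qed

section \<open>The commutator with a self-adjoint operator\<close>

lemma self_adjoint_domain:
  "self_adjoint A Dom \<Longrightarrow> csubspace Dom"
  "self_adjoint A Dom \<Longrightarrow> closure Dom = UNIV"
  unfolding self_adjoint_def by blast+

lemma self_adjoint_add: "self_adjoint A Dom \<Longrightarrow> x \<in> Dom \<Longrightarrow> y \<in> Dom \<Longrightarrow> A (x + y) = A x + A y"
  unfolding self_adjoint_def by blast

lemma self_adjoint_scaleC: "self_adjoint A Dom \<Longrightarrow> x \<in> Dom \<Longrightarrow> A (c *\<^sub>C x) = c *\<^sub>C A x"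
  unfolding self_adjoint_def by blast

lemma self_adjoint_symmetric:
  "self_adjoint A Dom \<Longrightarrow> x \<in> Dom \<Longrightarrow> y \<in> Dom \<Longrightarrow> cinner x (A y) = cinner (A x) y"
  unfolding self_adjoint_def by blast

lemma self_adjoint_domainI:
  "self_adjoint A Dom \<Longrightarrow> (\<And>y. y \<in> Dom \<Longrightarrow> cinner x (A y) = cinner \<eta> y) \<Longrightarrow> x \<in> Dom"
  unfolding self_adjoint_def by blast

lemma sesquilinear_diagonal_zero:
  assumes S: "csubspace S"
    and add_left: "\<And>x y z. x \<in> S \<Longrightarrow> y \<in> S \<Longrightarrow> z \<in> S \<Longrightarrow> F (x + y) z = F x z + F y z"
    and add_right: "\<And>x y z. x \<in> S \<Longrightarrow> y \<in> S \<Longrightarrow> z \<in> S \<Longrightarrow> F x (y + z) = F x y + F x z"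
    and scale_left: "\<And>c x y. x \<in> S \<Longrightarrow> y \<in> S \<Longrightarrow> F (c *\<^sub>C x) y = cnj c * F x y"
    and scale_right: "\<And>c x y. x \<in> S \<Longrightarrow> y \<in> S \<Longrightarrow> F x (c *\<^sub>C y) = c * F x y"
    and diag: "\<And>x. x \<in> S \<Longrightarrow> F x x = (0::complex)"
    and x: "x \<in> S" and y: "y \<in> S"
  shows "F x y = 0"
proof -
  have antisym: "F u v + F v u = 0" if "u \<in> S" "v \<in> S" for u v
  proof -
    have "0 = F (u + v) (u + v)"
      using diag[OF csubspace_add[OF S that]] by simp
    also have "\<dots> = F u u + F u v + (F v u + F v v)"
      using that csubspace_add[OF S that] by (simp add: add_left add_right)
    finally show ?thesis
      using diag that by simp
  qed
  have "\<i> * F x y + cnj \<i> * F y x = 0"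
    using antisym[OF x csubspace_scaleC[OF S y, of \<i>]] by (simp add: scale_left[OF y x] scale_right[OF x y])
  then have "\<i> * (F x y - F y x) = 0"
    by (simp add: algebra_simps)
  then have "F y x = F x y"
    by simp
  with antisym[OF x y] show ?thesis
    by simp
qed

definition commutator_form :: "('a::complex_inner \<Rightarrow> 'a) \<Rightarrow> ('a \<Rightarrow> 'a) \<Rightarrow> 'a \<Rightarrow> 'a \<Rightarrow> complex" where
  "commutator_form A S x y = cinner (A x) (S y) - cinner x (S (A y))"

lemma commutator_form_polarized:
  assumes A: "self_adjoint A Dom" and S: "bounded_clinear S" and B: "bounded_clinear B"
    and diag: "\<forall>\<phi>\<in>Dom. cinner \<phi> (B \<phi>) = commutator_form A S \<phi> \<phi>"
    and "x \<in> Dom" "y \<in> Dom"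
  shows "cinner x (B y) = commutator_form A S x y"
proof -
  have S: "clinear S" and B: "clinear B"
    using S B by (simp_all add: bounded_clinear_clinear)
  have "cinner x (B y) - commutator_form A S x y = 0"
    by (rule sesquilinear_diagonal_zero[OF self_adjoint_domain(1)[OF A], where F =
          "\<lambda>x y. cinner x (B y) - commutator_form A S x y"])
      (use assms(5,6) diag in \<open>auto simp: commutator_form_def cinner_add_left cinner_add_right
        cinner_scaleC_left cinner_scaleC_right self_adjoint_add[OF A] self_adjoint_scaleC[OF A]
        clinear_add[OF S] clinear_add[OF B] clinear_scaleC[OF S] clinear_scaleC[OF B]
        algebra_simps\<close>)
  then show ?thesis
    by simp
qed

lemma commutator_form_determines_operator:
  assumes A: "self_adjoint A Dom" and S: "bounded_clinear S"
    and B1: "bounded_clinear B1" "\<forall>\<phi>\<in>Dom. cinner \<phi> (B1 \<phi>) = commutator_form A S \<phi> \<phi>"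
    and B2: "bounded_clinear B2" "\<forall>\<phi>\<in>Dom. cinner \<phi> (B2 \<phi>) = commutator_form A S \<phi> \<phi>"
  shows "B1 = B2"
proof
  fix z
  have "cinner x (B1 y) - cinner x (B2 y) = 0" if "x \<in> Dom" for x y
  proof (rule dense_bounded_linear_eq_0[OF self_adjoint_domain(2)[OF A],
        where f = "\<lambda>y. cinner x (B1 y) - cinner x (B2 y)"])
    show "bounded_linear (\<lambda>y. cinner x (B1 y) - cinner x (B2 y))"
      by (intro bounded_linear_sub bounded_linear_compose[OF bounded_linear_cinner_right]
          bounded_clinear_bounded_linear B1(1) B2(1))
  qed (use commutator_form_polarized[OF A S B1] commutator_form_polarized[OF A S B2] that in auto)
  then have "B1 z - B2 z = 0"
    by (intro dense_orthogonal_eq_0[OF self_adjoint_domain(2)[OF A]]) (simp add: cinner_diff_right)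
  then show "B1 z = B2 z"
    by simp
qed

lemma commutator_characterization:
  assumes "self_adjoint A Dom" "C1 A Dom S"
  shows "bounded_clinear (commutator A Dom S) \<and>
    (\<forall>\<phi>\<in>Dom. cinner \<phi> (commutator A Dom S \<phi>) = commutator_form A S \<phi> \<phi>)"
proof -
  have S: "bounded_clinear S"
    using assms(2) unfolding C1_def by blast
  have "\<exists>!B. bounded_clinear B \<and> (\<forall>\<phi>\<in>Dom. cinner \<phi> (B \<phi>) = commutator_form A S \<phi> \<phi>)"
    using assms(2) commutator_form_determines_operator[OF assms(1) S]
    unfolding C1_def commutator_form_def by blast
  from theI'[OF this] show ?thesis
    unfolding commutator_def commutator_form_def .
qed

lemma bounded_clinear_commutator:
  "self_adjoint A Dom \<Longrightarrow> C1 A Dom S \<Longrightarrow> bounded_clinear (commutator A Dom S)"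
  using commutator_characterization by blast

lemma cinner_commutator:
  assumes "self_adjoint A Dom" "C1 A Dom S" "x \<in> Dom" "y \<in> Dom"
  shows "cinner x (commutator A Dom S y) = cinner (A x) (S y) - cinner x (S (A y))"
  using commutator_form_polarized[OF assms(1) _ bounded_clinear_commutator[OF assms(1,2)]]
    commutator_characterization[OF assms(1,2)] assms(2-4)
  unfolding C1_def commutator_form_def by blast

lemma inv_unitary_domain:
  fixes A :: "'a::chilbert_space \<Rightarrow> 'a"
  assumes A: "self_adjoint A Dom" and U: "unitary U" and C: "C1 A Dom U" and x: "x \<in> Dom"
  shows "inv U x \<in> Dom"
proof -
  let ?B = "commutator A Dom U"
  have B: "bounded_clinear ?B"
    by (rule bounded_clinear_commutator[OF A C])
  obtain \<zeta> where \<zeta>: "\<And>z. cinner x (?B z) = cinner \<zeta> z"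
    using riesz_representation[OF bounded_linear_compose[OF bounded_linear_cinner_right
          bounded_clinear_bounded_linear[OF B]]]
    by (metis B bounded_clinear_clinear clinear_scaleC cinner_scaleC_right)
  show ?thesis
  proof (rule self_adjoint_domainI[OF A])
    fix z assume z: "z \<in> Dom"
    have "cinner (inv U x) (A z) = cinner x (U (A z))"
      by (rule cinner_inv_unitary_left[OF U])
    also have "\<dots> = cinner (A x) (U z) - cinner x (?B z)"
      using cinner_commutator[OF A C x z] by simp
    also have "\<dots> = cinner (inv U (A x) - \<zeta>) z"
      by (simp add: \<zeta> cinner_diff_left cinner_inv_unitary_left[OF U])
    finally show "cinner (inv U x) (A z) = cinner (inv U (A x) - \<zeta>) z" .
  qed
qed

lemma commutator_inv_unitary_symmetric:
  fixes A :: "'a::chilbert_space \<Rightarrow> 'a"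
  assumes A: "self_adjoint A Dom" and U: "unitary U" and C: "C1 A Dom U" and x: "x \<in> Dom"
  shows "cinner (commutator A Dom U (inv U x)) y = cinner x (commutator A Dom U (inv U y))"
proof -
  let ?B = "commutator A Dom U"
  have on_domain: "cinner (?B (inv U x)) y = cinner x (?B (inv U y))" if y: "y \<in> Dom" for y
  proof -
    define u v where "u = inv U x" and "v = inv U y"
    have u: "u \<in> Dom" and v: "v \<in> Dom"
      using inv_unitary_domain[OF A U C] x y by (auto simp: u_def v_def)
    have Uu: "U u = x" and Uv: "U v = y"
      by (simp_all add: u_def v_def unitary_inv_right[OF U])
    have "cinner (?B u) y = cnj (cinner y (?B u))"
      by (rule cinner_commute)
    also have "\<dots> = cnj (cinner (A y) x - cinner v (A u))"
      using cinner_commutator[OF A C y u] by (simp add: Uu v_def cinner_inv_unitary_left[OF U])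
    also have "\<dots> = cinner x (A y) - cinner (A u) v"
      by (metis cinner_commute complex_cnj_diff)
    also have "\<dots> = cinner (A x) y - cinner u (A v)"
      using self_adjoint_symmetric[OF A] x y u v by simp
    also have "\<dots> = cinner x (?B v)"
      using cinner_commutator[OF A C x v] by (simp add: Uv u_def cinner_inv_unitary_left[OF U])
    finally show ?thesis
      by (simp add: u_def v_def)
  qed
  have "cinner (?B (inv U x)) y - cinner x (?B (inv U y)) = 0"
  proof (rule dense_bounded_linear_eq_0[OF self_adjoint_domain(2)[OF A],
        where f = "\<lambda>y. cinner (?B (inv U x)) y - cinner x (?B (inv U y))"])
    show "bounded_linear (\<lambda>y. cinner (?B (inv U x)) y - cinner x (?B (inv U y)))"
      by (intro bounded_linear_sub bounded_linear_cinner_right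
          bounded_linear_compose[OF bounded_linear_cinner_right] bounded_linear_compose[OF
            bounded_clinear_bounded_linear[OF bounded_clinear_commutator[OF A C]]]
          bounded_clinear_bounded_linear unitary_bounded_clinear unitary_inv U)
  qed (use on_domain in auto)
  then show ?thesis
    by simp
qed

lemma cmod_commutator_form_unitary_le:
  assumes "unitary U"
  shows "cmod (commutator_form A U x y) \<le> norm (A x) * norm y + norm x * norm (A y)"
proof -
  have "cmod (commutator_form A U x y) \<le> cmod (cinner (A x) (U y)) + cmod (cinner x (U (A y)))"
    unfolding commutator_form_def by (rule norm_triangle_ineq4)
  also have "\<dots> \<le> norm (A x) * norm y + norm x * norm (A y)"
    using cmod_cinner_le[of "A x" "U y"] cmod_cinner_le[of x "U (A y)"]
    by (simp add: unitary_norm[OF assms])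
  finally show ?thesis .
qed

lemma eventually_net:
  assumes "directed_set le"
  shows "eventually P (net le) \<longleftrightarrow> (\<exists>k. \<forall>j. le k j \<longrightarrow> P j)"
proof -
  have "eventually P (INF k. principal {j. le k j}) \<longleftrightarrow> (\<exists>k. eventually P (principal {j. le k j}))"
  proof (subst eventually_INF_base)
    fix a b
    obtain c where "le a c" "le b c"
      using assms unfolding directed_set_def by blast
    then have "{j. le c j} \<subseteq> {j. le a j} \<inter> {j. le b j}"
      using assms unfolding directed_set_def by blast
    then show "\<exists>x\<in>UNIV. principal {j. le x j} \<le> inf (principal {j. le a j}) (principal {j. le b j})"
      by (auto simp: inf_principal)
  qed auto
  then show ?thesis
    unfolding net_def by (simp add: eventually_principal)
qed

lemma net_neq_bot:
  assumes "directed_set le"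
  shows "net le \<noteq> bot"
proof
  assume "net le = bot"
  then obtain k where "\<forall>j. le k j \<longrightarrow> False"
    using eventually_net[OF assms, of "\<lambda>_. False"] by auto
  moreover have "le k k"
    using assms unfolding directed_set_def by blast
  ultimately show False
    by blast
qed

lemma clinear_strong_limit:
  assumes F: "F \<noteq> bot" and T: "\<And>j. clinear (T j)" and lim: "\<And>x. ((\<lambda>j. T j x) \<longlongrightarrow> D x) F"
  shows "clinear D"
  unfolding clinear_def
proof (intro conjI allI)
  fix x y
  show "D (x + y) = D x + D y"
    by (rule tendsto_unique[OF F lim]) (simp add: clinear_add[OF T] tendsto_add lim)
next
  fix c x
  show "D (c *\<^sub>C x) = c *\<^sub>C D x"
    by (rule tendsto_unique[OF F lim])
      (simp add: clinear_scaleC[OF T] bounded_linear.tendsto[OF bounded_linear_scaleC lim])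
qed

lemma symmetric_strong_limit:
  assumes F: "F \<noteq> bot" and T: "\<And>j y. cinner (T j x) y = cinner x (T j y)"
    and lim: "\<And>x. ((\<lambda>j. T j x) \<longlongrightarrow> D x) F"
  shows "cinner (D x) y = cinner x (D y)"
proof (rule tendsto_unique[OF F])
  show "((\<lambda>j. cinner (T j x) y) \<longlongrightarrow> cinner (D x) y) F"
    by (rule bounded_linear.tendsto[OF bounded_linear_cinner_left lim])
  show "((\<lambda>j. cinner (T j x) y) \<longlongrightarrow> cinner x (D y)) F"
    unfolding T by (rule bounded_linear.tendsto[OF bounded_linear_cinner_right lim])
qed

lemma tendsto_zero_on_closure:
  fixes f :: "'j \<Rightarrow> 'a::real_normed_vector \<Rightarrow> 'b::real_normed_vector"
  assumes lip: "\<And>j x y. norm (f j x - f j y) \<le> C * norm (x - y)"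
    and S: "\<And>x. x \<in> S \<Longrightarrow> ((\<lambda>j. f j x) \<longlongrightarrow> 0) F" and x: "x \<in> closure S"
  shows "((\<lambda>j. f j x) \<longlongrightarrow> 0) F"
  unfolding tendsto_iff
proof (intro allI impI)
  fix e :: real assume e: "e > 0"
  define C' where "C' = \<bar>C\<bar> + 1"
  have C': "C' > 0"
    by (simp add: C'_def add_nonneg_pos)
  obtain y where y: "y \<in> S" "dist y x < e / (2 * C')"
    using x e C' unfolding closure_approachable by (metis divide_pos_pos mult_pos_pos zero_less_numeral)
  have close: "norm (f j x - f j y) < e / 2" for j
  proof -
    have "C * norm (x - y) \<le> C' * norm (x - y)"
      by (intro mult_right_mono) (simp_all add: C'_def)
    then have "norm (f j x - f j y) \<le> C' * norm (x - y)"
      using lip[of j x y] by linarith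
    also have "\<dots> < e / 2"
      using y(2) C' by (simp add: dist_norm norm_minus_commute field_simps)
    finally show ?thesis .
  qed
  have "eventually (\<lambda>j. dist (f j y) 0 < e / 2) F"
    using S[OF y(1)] e unfolding tendsto_iff by (meson half_gt_zero)
  then show "eventually (\<lambda>j. dist (f j x) 0 < e) F"
  proof (rule eventually_mono)
    fix j assume "dist (f j y) 0 < e / 2"
    then show "dist (f j x) 0 < e"
      using close[of j] norm_triangle_ineq[of "f j x - f j y" "f j y"] by simp
  qed
qed

lemma csubspace_image:
  assumes S: "csubspace S" and f: "clinear f"
  shows "csubspace (f ` S)"
  unfolding csubspace_def
proof (intro conjI ballI allI)
  have "f 0 = 0"
    using clinear_add[OF f, of 0 0] by simp
  then show "0 \<in> f ` S"
    using csubspace_0[OF S] by (metis image_eqI)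
next
  fix x y assume "x \<in> f ` S" "y \<in> f ` S"
  then show "x + y \<in> f ` S"
    using csubspace_add[OF S] clinear_add[OF f] by (metis (no_types, lifting) image_iff)
next
  fix c x assume "x \<in> f ` S"
  then show "c *\<^sub>C x \<in> f ` S"
    using csubspace_scaleC[OF S] clinear_scaleC[OF f] by (metis (no_types, lifting) image_iff)
qed

lemma orth_compl_kernel_subset_closure_image:
  fixes D :: "'a::chilbert_space \<Rightarrow> 'a"
  assumes S: "csubspace S" "closure S = UNIV" and D: "clinear D"
    and sym: "\<And>x y. x \<in> S \<Longrightarrow> cinner (D x) y = cinner x (D y)"
  shows "orth_compl {x. D x = 0} \<subseteq> closure (D ` S)"
proof
  fix \<phi> assume \<phi>: "\<phi> \<in> orth_compl {x. D x = 0}"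
  obtain p where p: "p \<in> closure (D ` S)" "\<And>y. y \<in> closure (D ` S) \<Longrightarrow> cinner y (\<phi> - p) = 0"
    using closed_csubspace_projection[OF csubspace_closure[OF csubspace_image[OF S(1) D]]]
    by blast
  have "D (\<phi> - p) = 0"
  proof (rule dense_orthogonal_eq_0[OF S(2)])
    fix x assume "x \<in> S"
    then show "cinner x (D (\<phi> - p)) = 0"
      using sym p(2) closure_subset by (metis image_subset_iff)
  qed
  then have "cinner (\<phi> - p) \<phi> = 0"
    using \<phi> unfolding orth_compl_def by blast
  moreover have "cinner (\<phi> - p) p = 0"
    using p cinner_commute[of "\<phi> - p" p] by simp
  ultimately have "cinner (\<phi> - p) (\<phi> - p) = 0"
    by (simp add: cinner_diff_right)
  with p(1) show "\<phi> \<in> closure (D ` S)"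
    by simp
qed

section \<open>Unitary nets with a strong commutator limit\<close>

locale commutator_limit =
  fixes A :: "'h::chilbert_space \<Rightarrow> 'h" and Dom :: "'h set"
    and U :: "'j \<Rightarrow> 'h \<Rightarrow> 'h" and ell :: "'j \<Rightarrow> real" and F :: "'j filter"
    and D :: "'h \<Rightarrow> 'h"
  assumes A_self_adjoint: "self_adjoint A Dom"
    and U_unitary: "\<And>j. unitary (U j)"
    and U_C1: "\<And>j. C1 A Dom (U j)"
    and ell_nonneg: "\<And>j. ell j \<ge> 0"
    and ell_tendsto: "filterlim ell at_top F"
    and F_proper: "F \<noteq> bot"
    and strong_limit: "\<And>\<psi>. ((\<lambda>j. complex_of_real (1 / ell j) *\<^sub>C
        commutator A Dom (U j) (inv (U j) \<psi>)) \<longlongrightarrow> D \<psi>) F"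
begin

definition scaled_commutator :: "'j \<Rightarrow> 'h \<Rightarrow> 'h" where
  "scaled_commutator j \<psi> = complex_of_real (1 / ell j) *\<^sub>C commutator A Dom (U j) (inv (U j) \<psi>)"

lemma scaled_commutator_tendsto: "((\<lambda>j. scaled_commutator j \<psi>) \<longlongrightarrow> D \<psi>) F"
  unfolding scaled_commutator_def by (rule strong_limit)

lemma clinear_scaled_commutator: "clinear (scaled_commutator j)"
proof -
  have C: "clinear (commutator A Dom (U j))" and V: "clinear (inv (U j))"
    using bounded_clinear_commutator[OF A_self_adjoint U_C1] unitary_inv[OF U_unitary]
    by (simp_all add: bounded_clinear_clinear unitary_bounded_clinear)
  show ?thesis
    unfolding clinear_def scaled_commutator_def
    by (simp add: clinear_add[OF C] clinear_add[OF V] clinear_scaleC[OF C] clinear_scaleC[OF V]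
        scaleC_add_right scaleC_scaleC mult.commute)
qed

lemma scaled_commutator_symmetric:
  "x \<in> Dom \<Longrightarrow> cinner (scaled_commutator j x) y = cinner x (scaled_commutator j y)"
  using commutator_inv_unitary_symmetric[OF A_self_adjoint U_unitary U_C1]
  by (simp add: scaled_commutator_def cinner_scaleC_left cinner_scaleC_right)

lemma clinear_D: "clinear D"
  by (rule clinear_strong_limit[OF F_proper clinear_scaled_commutator scaled_commutator_tendsto])

lemma D_symmetric: "x \<in> Dom \<Longrightarrow> cinner (D x) y = cinner x (D y)"
  by (rule symmetric_strong_limit[OF F_proper scaled_commutator_symmetric scaled_commutator_tendsto])

text \<open>Symmetry moves \<open>U\<^sub>j\<^sup>-\<^sup>1\<close> onto \<open>U\<^sub>j \<psi>\<close>, leaving a matrix element of \<open>[A, U\<^sub>j]\<close>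
  between vectors of the domain, which is bounded independently of \<open>j\<close>.\<close>
lemma cinner_scaled_commutator_unitary:
  assumes "\<eta> \<in> Dom" "\<psi> \<in> Dom"
  shows "cinner (scaled_commutator j \<eta>) (U j \<psi>)
    = complex_of_real (1 / ell j) * commutator_form A (U j) \<eta> \<psi>"
  using scaled_commutator_symmetric[OF assms(1)] cinner_commutator[OF A_self_adjoint U_C1 assms]
  by (simp add: scaled_commutator_def commutator_form_def cinner_scaleC_right
      unitary_inv_left[OF U_unitary])

lemma tendsto_cinner_D_unitary_domain:
  assumes \<eta>: "\<eta> \<in> Dom" and \<psi>: "\<psi> \<in> Dom"
  shows "((\<lambda>j. cinner (D \<eta>) (U j \<psi>)) \<longlongrightarrow> 0) F"
proof -
  define K where "K = norm (A \<eta>) * norm \<psi> + norm \<eta> * norm (A \<psi>)"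
  have bound: "norm (cinner (D \<eta>) (U j \<psi>))
      \<le> 1 / ell j * K + norm (scaled_commutator j \<eta> - D \<eta>) * norm \<psi>" for j
  proof -
    have "cinner (D \<eta>) (U j \<psi>)
        = cinner (scaled_commutator j \<eta>) (U j \<psi>) - cinner (scaled_commutator j \<eta> - D \<eta>) (U j \<psi>)"
      by (simp add: cinner_diff_left)
    also have "norm \<dots> \<le> norm (cinner (scaled_commutator j \<eta>) (U j \<psi>))
        + norm (cinner (scaled_commutator j \<eta> - D \<eta>) (U j \<psi>))"
      by (rule norm_triangle_ineq4)
    also have "\<dots> \<le> 1 / ell j * K + norm (scaled_commutator j \<eta> - D \<eta>) * norm \<psi>"
    proof (rule add_mono)
      have "norm (cinner (scaled_commutator j \<eta>) (U j \<psi>)) = 1 / ell j * cmod (commutator_form A (U j) \<eta> \<psi>)"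
        using ell_nonneg[of j] by (simp add: cinner_scaled_commutator_unitary[OF \<eta> \<psi>] norm_divide)
      also have "\<dots> \<le> 1 / ell j * K"
        using ell_nonneg[of j] cmod_commutator_form_unitary_le[OF U_unitary, of A j \<eta> \<psi>]
        by (simp add: K_def divide_right_mono)
      finally show "norm (cinner (scaled_commutator j \<eta>) (U j \<psi>)) \<le> 1 / ell j * K" .
      show "norm (cinner (scaled_commutator j \<eta> - D \<eta>) (U j \<psi>))
          \<le> norm (scaled_commutator j \<eta> - D \<eta>) * norm \<psi>"
        using cmod_cinner_le[of "scaled_commutator j \<eta> - D \<eta>" "U j \<psi>"]
        by (simp add: unitary_norm[OF U_unitary])
    qed
    finally show ?thesis .
  qed
  have "((\<lambda>j. 1 / ell j * K + norm (scaled_commutator j \<eta> - D \<eta>) * norm \<psi>) \<longlongrightarrow>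
      0 * K + 0 * norm \<psi>) F"
    using tendsto_inverse_0_at_top[OF ell_tendsto]
      tendsto_norm_zero[OF LIM_zero[OF scaled_commutator_tendsto]]
    by (intro tendsto_intros) (simp_all add: inverse_eq_divide)
  then show ?thesis
    using Lim_null_comparison[OF always_eventually[OF allI[OF bound]]] by simp
qed

lemma tendsto_cinner_D_unitary:
  assumes "\<eta> \<in> Dom"
  shows "((\<lambda>j. cinner (D \<eta>) (U j \<psi>)) \<longlongrightarrow> 0) F"
proof (rule tendsto_zero_on_closure[where f = "\<lambda>j x. cinner (D \<eta>) (U j x)"
      and C = "norm (D \<eta>)" and S = Dom])
  fix j x y
  have "cinner (D \<eta>) (U j x) - cinner (D \<eta>) (U j y) = cinner (D \<eta>) (U j (x - y))"
    by (simp add: cinner_diff_right unitary_diff[OF U_unitary])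
  then show "norm (cinner (D \<eta>) (U j x) - cinner (D \<eta>) (U j y)) \<le> norm (D \<eta>) * norm (x - y)"
    using cmod_cinner_le[of "D \<eta>" "U j (x - y)"] by (simp add: unitary_norm[OF U_unitary])
qed (use assms tendsto_cinner_D_unitary_domain self_adjoint_domain(2)[OF A_self_adjoint] in auto)

lemma tendsto_cinner_unitary_zero:
  assumes "\<phi> \<in> orth_compl {x. D x = 0}"
  shows "((\<lambda>j. cinner \<phi> (U j \<psi>)) \<longlongrightarrow> 0) F"
proof (rule tendsto_zero_on_closure[where f = "\<lambda>j x. cinner x (U j \<psi>)"
      and C = "norm \<psi>" and S = "D ` Dom"])
  fix j x y
  show "norm (cinner x (U j \<psi>) - cinner y (U j \<psi>)) \<le> norm \<psi> * norm (x - y)"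
    using cmod_cinner_le[of "x - y" "U j \<psi>"]
    by (simp add: cinner_diff_left unitary_norm[OF U_unitary] mult.commute)
next
  show "\<phi> \<in> closure (D ` Dom)"
    using orth_compl_kernel_subset_closure_image[OF self_adjoint_domain[OF A_self_adjoint]
        clinear_D D_symmetric] assms by blast
qed (use tendsto_cinner_D_unitary in auto)

end

theorem proposition2p1:
  fixes le :: "'j \<Rightarrow> 'j \<Rightarrow> bool"
    and U :: "'j \<Rightarrow> 'h::chilbert_space \<Rightarrow> 'h"
    and ell :: "'j \<Rightarrow> real"
    and A :: "'h \<Rightarrow> 'h" and domA :: "'h set"
    and D :: "'h \<Rightarrow> 'h"
  assumes "directed_set le"
    and "\<And>j. unitary (U j)"
    and "\<And>j. ell j \<ge> 0"
    and "filterlim ell at_top (net le)"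
    and "self_adjoint A domA"
    and "\<And>j. C1 A domA (U j)"
    and "\<And>\<psi>. ((\<lambda>j. complex_of_real (1 / ell j) *\<^sub>C
                  commutator A domA (U j) (inv (U j) \<psi>)) \<longlongrightarrow> D \<psi>) (net le)"
  shows "\<forall>\<phi>\<in>orth_compl {x. D x = 0}. \<forall>\<psi>.
           ((\<lambda>j. cinner \<phi> (U j \<psi>)) \<longlongrightarrow> 0) (net le)"
proof -
  interpret commutator_limit A domA U ell "net le" D
    by unfold_locales (use assms net_neq_bot[OF assms(1)] in blast)+
  show ?thesis
    using tendsto_cinner_unitary_zero by blast
qed

end
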